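(* (i) For every $n\in\mathbb{N}$ and $a\in\mathbb{C}\setminus\mathbb{Z}^-$, \[ \sum_{j=0}^{n}\sum_{i=0}^{j}\frac{\binom{n+a+1}{i}}{\binom{n+a}{j}}(-1)^i=\frac{(-1)^n+1}{2}. \] (ii) For every $n\in\mathbb{N}$, \[ \sum_{j=0}^{n}\sum_{i=0}^{j}\frac{\binom{n+2}{i}}{\binom{n}{j}}(-1)^{n-i}=(n+1)\Big(H_{n+1}-H_{\lfloor\frac{n+1}{2}\rfloor}\Big). \]
   Context: For $x\in\mathbb{C}$, $i\in\mathbb{N}$: $\binom{x}{i}=x(x-1)\cdots(x-i+1)/i!$. $\mathbb{Z}^-=\{-1,-2,\dots\}$. $H_n=\sum_{k=1}^{n}\frac1k$ is the $n$-th harmonic number ($H_0=0$). *)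

theory Defs
  imports "HOL-Analysis.Analysis"
begin

end

theory Submission
  imports Defs
begin

text \<open>Both parts rest on the partial alternating row sum
  \<open>\<Sum>i\<le>j. (-1)^i (y+1 gchoose i) = (-1)^j (y gchoose j)\<close>.
  In (i) the inner sum therefore collapses to \<open>(-1)^j\<close>, as long as no \<open>n+a gchoose j\<close> with
  \<open>j \<le> n\<close> vanishes, which is exactly what excluding the negative integers guarantees.
  In (ii) the inner sum becomes \<open>(-1)^(n+j) (n+1 choose j) / (n choose j) = (n+1) (-1)^(n+j) / (n+1-j)\<close>,
  so the double sum is \<open>n+1\<close> times the alternating harmonic sum \<open>1 - 1/2 + \<dots> \<plusminus> 1/(n+1)\<close>,
  and \<open>1 - 1/2 + \<dots> \<plusminus> 1/m = H\<^sub>m - H\<^bsub>\<lfloor>m/2\<rfloor>\<^esub>\<close> because twice the even-indexed terms sum to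
  \<open>H\<^bsub>\<lfloor>m/2\<rfloor>\<^esub>\<close>.\<close>

lemma sum_alternating_gbinomial_Suc:
  fixes y :: "'a::field_char_0"
  shows "(\<Sum>i=0..j. ((y + 1) gchoose i) * (-1)^i) = (-1)^j * (y gchoose j)"
  using gbinomial_sum_lower_neg[of "y + 1" j] by (simp add: atLeast0AtMost)

lemma gbinomial_nonzero:
  fixes x :: "'a::field_char_0"
  assumes "\<And>k. k < j \<Longrightarrow> x \<noteq> of_nat k"
  shows "x gchoose j \<noteq> 0"
proof -
  have "(\<Prod>i = 0..<j. x - of_nat i) \<noteq> 0"
    using assms by (simp add: prod_zero_iff)
  then show ?thesis
    using gbinomial_mult_fact[of j x] by auto
qed

lemma sum_neg_one_power:
  "(\<Sum>j=0..n. (-1::'a::field_char_0)^j) = ((-1)^n + 1) / 2"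
  by (induction n) (auto simp: field_simps)

lemma double_sum_gbinomial_quotient:
  fixes y :: "'a::field_char_0"
  assumes "\<And>k. k < n \<Longrightarrow> y \<noteq> of_nat k"
  shows "(\<Sum>j=0..n. \<Sum>i=0..j. ((y + 1) gchoose i) / (y gchoose j) * (-1)^i) = ((-1)^n + 1) / 2"
proof -
  have "(\<Sum>i=0..j. ((y + 1) gchoose i) / (y gchoose j) * (-1)^i) = (-1)^j" if "j \<le> n" for j
  proof -
    have "y gchoose j \<noteq> 0"
      using that by (intro gbinomial_nonzero assms) simp
    moreover have "(\<Sum>i=0..j. ((y + 1) gchoose i) / (y gchoose j) * (-1)^i)
        = (\<Sum>i=0..j. ((y + 1) gchoose i) * (-1)^i) / (y gchoose j)"
      by (simp add: sum_divide_distrib)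
    ultimately show ?thesis
      by (simp add: sum_alternating_gbinomial_Suc)
  qed
  then show ?thesis
    by (simp add: sum_neg_one_power)
qed

lemma sum_alternating_choose_Suc:
  "(\<Sum>i=0..j. real (Suc m choose i) * (-1)^i) = (-1)^j * real (m choose j)"
  using sum_alternating_gbinomial_Suc[of "real m" j] by (simp add: binomial_gbinomial add.commute)

lemma choose_Suc_over_choose:
  assumes "j \<le> n"
  shows "real (Suc n choose j) / real (n choose j) = real (Suc n) / real (Suc n - j)"
proof -
  have "(Suc n - j) * (Suc n choose j) = Suc n * (n choose j)"
    using binomial_absorb_comp[of "Suc n" j] by simp
  then have "real (Suc n - j) * real (Suc n choose j) = real (Suc n) * real (n choose j)"
    by (metis of_nat_mult)
  moreover have "real (n choose j) \<noteq> 0" "real (Suc n - j) \<noteq> 0"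
    using assms by auto
  ultimately show ?thesis
    by (simp add: field_simps)
qed

lemma sum_alternating_inverse:
  "(\<Sum>k=1..m. (-1)^(k+1) / real k) = harm m - harm (m div 2)"
proof (induction m)
  case 0
  then show ?case by simp
next
  case (Suc m)
  have "(\<Sum>k=1..Suc m. (-1)^(k+1) / real k) = harm m - harm (m div 2) + (-1)^m / real (Suc m)"
    using Suc by simp
  moreover have "harm (Suc m div 2) = harm (m div 2) + (if odd m then 2 / real (Suc m) else 0)"
  proof (cases "even m")
    case False
    then have "Suc m div 2 = Suc (m div 2)" "real (Suc m) = 2 * real (Suc (m div 2))"
      by (auto elim!: oddE)
    then show ?thesis
      using False by (simp add: harm_Suc inverse_eq_divide field_simps)
  qed simp
  ultimately show ?case
    by (simp add: harm_Suc inverse_eq_divide)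
qed

lemma double_sum_choose_quotient:
  "(\<Sum>j=0..n. \<Sum>i=0..j. real ((n + 2) choose i) / real (n choose j) * (-1)^(n - i))
     = real (n + 1) * (\<Sum>k=1..n+1. (-1)^(k+1) / real k)"
proof -
  have inner: "(\<Sum>i=0..j. real ((n + 2) choose i) / real (n choose j) * (-1)^(n - i))
      = real (n + 1) * ((-1)^(n + j) / real (n + 1 - j))" if "j \<le> n" for j
  proof -
    have "(\<Sum>i=0..j. real ((n + 2) choose i) / real (n choose j) * (-1)^(n - i))
        = (-1)^n / real (n choose j) * (\<Sum>i=0..j. real (Suc (Suc n) choose i) * (-1)^i)"
      using that
      by (simp add: sum_distrib_left flip: neg_one_power_add_eq_neg_one_power_diff)
         (simp add: power_add mult_ac)
    also have "\<dots> = (-1)^(n + j) * (real (Suc n choose j) / real (n choose j))"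
      by (simp add: sum_alternating_choose_Suc power_add)
    finally show ?thesis
      using that by (simp add: choose_Suc_over_choose)
  qed
  have "(\<Sum>j=0..n. \<Sum>i=0..j. real ((n + 2) choose i) / real (n choose j) * (-1)^(n - i))
      = (\<Sum>j=0..n. real (n + 1) * ((-1)^(n + j) / real (n + 1 - j)))"
    by (intro sum.cong refl inner) simp
  also have "\<dots> = real (n + 1) * (\<Sum>j=0..n. (-1)^(n + j) / real (n + 1 - j))"
    by (simp add: sum_distrib_left)
  also have "(\<Sum>j=0..n. (-1::real)^(n + j) / real (n + 1 - j)) = (\<Sum>k=1..n+1. (-1)^(k+1) / real k)"
    by (rule sum.reindex_bij_witness[of _ "\<lambda>k. n + 1 - k" "\<lambda>j. n + 1 - j"])
       (auto simp: neg_one_power_add_eq_neg_one_power_diff Suc_diff_le)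
  finally show ?thesis .
qed

theorem mainTheorem12:
  shows "(\<forall>(n::nat) (a::complex). a \<notin> {z. \<exists>k::nat. k \<ge> 1 \<and> z = - of_nat k} \<longrightarrow>
            (\<Sum>j=0..n. \<Sum>i=0..j. ((of_nat n + a + 1) gchoose i) / ((of_nat n + a) gchoose j) * (-1)^i)
              = ((-1)^n + 1) / 2)
       \<and> (\<forall>n::nat.
            (\<Sum>j=0..n. \<Sum>i=0..j. real ((n + 2) choose i) / real (n choose j) * (-1)^(n - i))
              = real (n + 1) * (harm (n + 1) - harm ((n + 1) div 2)))"
proof (intro conjI allI impI)
  fix n :: nat and a :: complex
  assume a: "a \<notin> {z. \<exists>k::nat. k \<ge> 1 \<and> z = - of_nat k}"
  have "of_nat n + a \<noteq> of_nat k" if "k < n" for k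
  proof
    assume "of_nat n + a = of_nat k"
    then have "a = - of_nat (n - k)"
      using that by (simp add: of_nat_diff algebra_simps)
    moreover have "n - k \<ge> 1"
      using that by simp
    ultimately show False
      using a by blast
  qed
  then show "(\<Sum>j=0..n. \<Sum>i=0..j. ((of_nat n + a + 1) gchoose i) / ((of_nat n + a) gchoose j) * (-1)^i)
      = ((-1)^n + 1) / 2"
    by (rule double_sum_gbinomial_quotient)
next
  fix n :: nat
  show "(\<Sum>j=0..n. \<Sum>i=0..j. real ((n + 2) choose i) / real (n choose j) * (-1)^(n - i))
      = real (n + 1) * (harm (n + 1) - harm ((n + 1) div 2))"
    by (simp only: double_sum_choose_quotient sum_alternating_inverse)
qed

end
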